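(* Let $G$ be a finite graph, let $(C,D)$ be an ordered partition of $V(G)$, let $c_0\in C$ and $d_0\in D$, and let $(V_1,\dots,V_k)$ be a $D$-twin partition of $C$. Then \[\mathrm{dist}_G(c_0,d_0)=\min_{i\in[k]}\bigl(\mathrm{dist}_G(c_0,V_i)+\mathrm{dist}_{G[V_i\cup D]}(V_i,d_0)\bigr).\]
   Context: An ordered partition of a set is a finite sequence of pairwise disjoint (possibly empty) subsets whose union is the set. For a partition $\{C,D\}$ of $V(G)$, a $D$-twin partition of $C$ is a partition $(V_1,\dots,V_k)$ of $C$ (parts may be empty) such that for each $i$ and all $u,v\in V_i$, $N_G(u)\cap D=N_G(v)\cap D$. $\mathrm{dist}_G$ is shortest-path distance ($\infty$ if no path); for sets, $\mathrm{dist}_G(U,x)=\min_{u\in U}\mathrm{dist}_G(u,x)$ with $\min\emptyset=\infty$. $G[W]$ denotes the induced subgraph. *)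

theory Defs
  imports Main "HOL-Library.Extended_Nat"
begin

definition finite_graph :: "'a set \<Rightarrow> ('a \<Rightarrow> 'a \<Rightarrow> bool) \<Rightarrow> bool" where
  "finite_graph V E \<longleftrightarrow> finite V \<and> (\<forall>u v. E u v \<longrightarrow> E v u) \<and> (\<forall>u. \<not> E u u)
     \<and> (\<forall>u v. E u v \<longrightarrow> u \<in> V \<and> v \<in> V)"

definition walk_in :: "'a set \<Rightarrow> ('a \<Rightarrow> 'a \<Rightarrow> bool) \<Rightarrow> 'a list \<Rightarrow> bool" where
  "walk_in W E xs \<longleftrightarrow> xs \<noteq> [] \<and> set xs \<subseteq> W \<and> (\<forall>i. Suc i < length xs \<longrightarrow> E (xs ! i) (xs ! Suc i))"

text \<open>Shortest-path distance in G[W] (infinity if no path).\<close>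

definition gdist :: "'a set \<Rightarrow> ('a \<Rightarrow> 'a \<Rightarrow> bool) \<Rightarrow> 'a \<Rightarrow> 'a \<Rightarrow> enat" where
  "gdist W E u v = Inf {enat (length xs - 1) | xs. walk_in W E xs \<and> hd xs = u \<and> last xs = v}"

text \<open>Distance in G[W] from a vertex set U to a vertex x (infinity if U is empty).\<close>

definition gsetdist :: "'a set \<Rightarrow> ('a \<Rightarrow> 'a \<Rightarrow> bool) \<Rightarrow> 'a set \<Rightarrow> 'a \<Rightarrow> enat" where
  "gsetdist W E U x = Inf {gdist W E u x | u. u \<in> U}"

end

theory Submission
  imports Defs
begin

text \<open>
  A shortest c0-d0 walk leaves C for the last time at some vertex w, say w \<in> V_i; the part up to w
  bounds dist(c0, V_i) and the part from w on runs in G[V_i \<union> D], which gives \<ge>.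
  Conversely, take a shortest walk from c0 to some u \<in> V_i and a shortest walk in G[V_i \<union> D] from
  some u' \<in> V_i to d0. The last V_i-vertex of the second walk is followed by a vertex of D, which is
  also adjacent to u since u and that vertex are D-twins; splicing there gives \<le>.
\<close>

lemma walk_in_Cons:
  "walk_in W E (x # xs) \<longleftrightarrow> x \<in> W \<and> (xs = [] \<or> E x (hd xs) \<and> walk_in W E xs)"
proof (cases xs)
  case (Cons y ys)
  have "(\<forall>i. Suc i < length (x # xs) \<longrightarrow> E ((x # xs) ! i) ((x # xs) ! Suc i)) \<longleftrightarrow>
        E x y \<and> (\<forall>i. Suc i < length xs \<longrightarrow> E (xs ! i) (xs ! Suc i))"
    using Cons by (auto simp: All_less_Suc2 simp del: length_Cons)
  then show ?thesis using Cons by (auto simp: walk_in_def)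
qed (simp add: walk_in_def)

lemma walk_in_append:
  assumes "walk_in W E xs" "walk_in W E ys" "E (last xs) (hd ys)"
  shows "walk_in W E (xs @ ys)"
  using assms by (induction xs rule: induct_list012) (auto simp: walk_in_Cons)

lemma walk_in_rev:
  assumes "symp E" "walk_in W E xs"
  shows "walk_in W E (rev xs)"
  using assms(2)
proof (induction xs)
  case (Cons x xs)
  show ?case
  proof (cases "xs = []")
    case False
    then have "walk_in W E (rev xs)" "E (last (rev xs)) (hd [x])" "walk_in W E [x]"
      using Cons by (auto simp: walk_in_Cons last_rev sympD[OF assms(1)])
    then show ?thesis by (simp add: walk_in_append)
  qed (use Cons.prems in simp)
qed (simp add: walk_in_def)

lemma walk_in_take: "walk_in W E xs \<Longrightarrow> 0 < n \<Longrightarrow> walk_in W E (take n xs)"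
  by (auto simp: walk_in_def dest: in_set_takeD)

lemma walk_in_drop: "walk_in W E xs \<Longrightarrow> n < length xs \<Longrightarrow> walk_in W E (drop n xs)"
  by (auto simp: walk_in_def dest: in_set_dropD)

lemma walk_in_if_set_subset: "walk_in W E xs \<Longrightarrow> set xs \<subseteq> W' \<Longrightarrow> walk_in W' E xs"
  by (auto simp: walk_in_def)

lemma walk_in_mono: "walk_in W E xs \<Longrightarrow> W \<subseteq> W' \<Longrightarrow> walk_in W' E xs"
  by (auto simp: walk_in_def)

lemma exists_last_index_satisfying:
  assumes "xs \<noteq> []" "P (hd xs)" "\<not> P (last xs)"
  obtains j where "Suc j < length xs" "P (xs ! j)" "\<And>m. j < m \<Longrightarrow> m < length xs \<Longrightarrow> \<not> P (xs ! m)"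
proof -
  let ?M = "{m. m < length xs \<and> P (xs ! m)}"
  define j where "j = Max ?M"
  have "0 \<in> ?M" using assms by (simp add: hd_conv_nth)
  then have "j \<in> ?M" unfolding j_def by (intro Max_in) auto
  then have j: "j < length xs" "P (xs ! j)" by auto
  have "m \<le> j" if "m \<in> ?M" for m
    unfolding j_def by (rule Max_ge) (use that in auto)
  then have after_j: "\<not> P (xs ! m)" if "j < m" "m < length xs" for m
    using that by fastforce
  have "j \<noteq> length xs - 1" using j assms by (metis last_conv_nth)
  with j have "Suc j < length xs" by linarith
  with j after_j show ?thesis using that by blast
qed

lemma Inf_enat_mem:
  fixes S :: "enat set"
  assumes "Inf S \<noteq> \<infinity>"
  shows "Inf S \<in> S"
proof -
  have "S \<noteq> {}" using assms by (auto simp: top_enat_def)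
  then show ?thesis by (auto intro: wellorder_InfI)
qed

lemma gdist_le_walk: "walk_in W E xs \<Longrightarrow> gdist W E (hd xs) (last xs) \<le> enat (length xs - 1)"
  unfolding gdist_def by (rule Inf_lower) blast

lemma gdist_attained_by_walk:
  assumes "gdist W E u v \<noteq> \<infinity>"
  obtains xs where "walk_in W E xs" "hd xs = u" "last xs = v" "gdist W E u v = enat (length xs - 1)"
  using Inf_enat_mem[OF assms[unfolded gdist_def]] that unfolding gdist_def by blast

lemma gdist_mono: "W \<subseteq> W' \<Longrightarrow> gdist W' E u v \<le> gdist W E u v"
  unfolding gdist_def by (rule Inf_superset_mono) (auto intro: walk_in_mono)

lemma gdist_commute:
  assumes "symp E"
  shows "gdist W E u v = gdist W E v u"
proof -
  have le: "gdist W E y x \<le> gdist W E x y" for x y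
  proof (cases "gdist W E x y = \<infinity>")
    case False
    then obtain xs where xs: "walk_in W E xs" "hd xs = x" "last xs = y" "gdist W E x y = enat (length xs - 1)"
      by (rule gdist_attained_by_walk)
    have "gdist W E (hd (rev xs)) (last (rev xs)) \<le> enat (length (rev xs) - 1)"
      using walk_in_rev[OF assms xs(1)] by (rule gdist_le_walk)
    with xs show ?thesis by (simp add: hd_rev last_rev)
  qed simp
  show ?thesis by (rule antisym[OF le le])
qed

lemma gdist_le_via_edge:
  assumes "E v v'"
  shows "gdist W E u w \<le> gdist W E u v + 1 + gdist W E v' w"
proof (cases "gdist W E u v = \<infinity> \<or> gdist W E v' w = \<infinity>")
  case False
  then obtain xs ys where
    xs: "walk_in W E xs" "hd xs = u" "last xs = v" "gdist W E u v = enat (length xs - 1)" and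
    ys: "walk_in W E ys" "hd ys = v'" "last ys = w" "gdist W E v' w = enat (length ys - 1)"
    by (metis gdist_attained_by_walk)
  then have "gdist W E u w \<le> enat (length (xs @ ys) - 1)"
    using gdist_le_walk[OF walk_in_append[OF xs(1) ys(1)]] assms by (simp add: walk_in_def)
  also have "length (xs @ ys) - 1 = (length xs - 1) + 1 + (length ys - 1)"
    using xs(1) ys(1) by (cases xs; cases ys) (auto simp: walk_in_def)
  also have "enat \<dots> = gdist W E u v + 1 + gdist W E v' w"
    using xs(4) ys(4) by (simp add: one_enat_def)
  finally show ?thesis .
qed (elim disjE; simp)

lemma gsetdist_le_gdist: "u \<in> U \<Longrightarrow> gsetdist W E U x \<le> gdist W E u x"
  unfolding gsetdist_def by (rule Inf_lower) blast

lemma gsetdist_attained: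
  assumes "gsetdist W E U x \<noteq> \<infinity>"
  obtains u where "u \<in> U" "gsetdist W E U x = gdist W E u x"
  using Inf_enat_mem[OF assms[unfolded gsetdist_def]] that unfolding gsetdist_def by blast

lemma gdist_split_at_last_vertex_in:
  assumes "c \<in> C" "d \<notin> C"
  obtains w where "w \<in> C" "gdist W E c w + gdist (insert w (W - C)) E w d \<le> gdist W E c d"
proof (cases "gdist W E c d = \<infinity>")
  case True
  then show ?thesis using that assms(1) by simp
next
  case False
  then obtain xs where
    xs: "walk_in W E xs" "hd xs = c" "last xs = d" "gdist W E c d = enat (length xs - 1)"
    by (rule gdist_attained_by_walk)
  obtain j where j: "Suc j < length xs" "xs ! j \<in> C"
    and after_j: "\<And>m. j < m \<Longrightarrow> m < length xs \<Longrightarrow> xs ! m \<notin> C"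
    using exists_last_index_satisfying[of xs "\<lambda>x. x \<in> C"] xs(1-3) assms by (auto simp: walk_in_def)
  let ?w = "xs ! j"
  have "gdist W E (hd (take (Suc j) xs)) (last (take (Suc j) xs)) \<le> enat (length (take (Suc j) xs) - 1)"
    by (rule gdist_le_walk[OF walk_in_take[OF xs(1)]]) simp
  moreover have "last (take (Suc j) xs) = ?w" using j(1) by (simp add: take_Suc_conv_app_nth)
  ultimately have prefix: "gdist W E c ?w \<le> enat j"
    using xs(2) j(1) by simp
  have "drop j xs = ?w # drop (Suc j) xs" using j(1) by (simp add: Cons_nth_drop_Suc)
  moreover have "set (drop (Suc j) xs) \<subseteq> W - C"
  proof
    fix x assume "x \<in> set (drop (Suc j) xs)"
    then obtain m where "m < length (drop (Suc j) xs)" "x = drop (Suc j) xs ! m"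
      by (metis in_set_conv_nth)
    then show "x \<in> W - C" using xs(1) after_j[of "Suc j + m"] by (auto simp: walk_in_def)
  qed
  ultimately have "set (drop j xs) \<subseteq> insert ?w (W - C)" by auto
  then have "walk_in (insert ?w (W - C)) E (drop j xs)"
    using j(1) by (intro walk_in_if_set_subset[OF walk_in_drop[OF xs(1)]]) simp_all
  from gdist_le_walk[OF this] have suffix: "gdist (insert ?w (W - C)) E ?w d \<le> enat (length xs - 1 - j)"
    using xs(3) j(1) by (simp add: hd_drop_conv_nth)
  have "gdist W E c ?w + gdist (insert ?w (W - C)) E ?w d \<le> enat j + enat (length xs - 1 - j)"
    using prefix suffix by (rule add_mono)
  also have "\<dots> = gdist W E c d" using xs(4) j(1) by simp
  finally show ?thesis using that j(2) by blast
qed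

lemma gdist_le_via_twin:
  assumes twins: "\<forall>u\<in>U. \<forall>v\<in>U. {x\<in>D. E u x} = {x\<in>D. E v x}"
    and "U \<union> D \<subseteq> W" "u \<in> U" "u' \<in> U" "d \<notin> U"
  shows "gdist W E c d \<le> gdist W E c u + gdist (U \<union> D) E u' d"
proof (cases "gdist (U \<union> D) E u' d = \<infinity>")
  case True
  then show ?thesis by simp
next
  case False
  then obtain ys where
    ys: "walk_in (U \<union> D) E ys" "hd ys = u'" "last ys = d" "gdist (U \<union> D) E u' d = enat (length ys - 1)"
    by (rule gdist_attained_by_walk)
  obtain j where j: "Suc j < length ys" "ys ! j \<in> U"
    and after_j: "\<And>m. j < m \<Longrightarrow> m < length ys \<Longrightarrow> ys ! m \<notin> U"
    using exists_last_index_satisfying[of ys "\<lambda>x. x \<in> U"] ys(1-3) assms(4,5) by (auto simp: walk_in_def)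
  let ?x = "ys ! Suc j"
  have "?x \<in> set ys" using j(1) by simp
  then have "?x \<in> D" using ys(1) after_j[of "Suc j"] j(1) unfolding walk_in_def by blast
  moreover have "E (ys ! j) ?x" using ys(1) j(1) by (simp add: walk_in_def)
  ultimately have "E u ?x" using twins assms(3) j(2) by blast
  then have "gdist W E c d \<le> gdist W E c u + 1 + gdist W E ?x d" by (rule gdist_le_via_edge)
  also have "gdist W E ?x d \<le> enat (length ys - 1 - Suc j)"
    using gdist_le_walk[OF walk_in_drop[OF walk_in_mono[OF ys(1) assms(2)] j(1)]] ys(3) j(1)
    by (simp add: hd_drop_conv_nth)
  then have "gdist W E c u + 1 + gdist W E ?x d \<le> gdist W E c u + (1 + enat (length ys - 1 - Suc j))"
    by (simp add: add.assoc add_left_mono)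
  also have "1 + enat (length ys - 1 - Suc j) \<le> gdist (U \<union> D) E u' d"
    using ys(4) j(1) by (simp add: one_enat_def)
  finally show ?thesis by (simp add: add_left_mono)
qed

lemma gdist_le_gsetdist_via_twin_class:
  assumes "symp E"
    and twins: "\<forall>u\<in>U. \<forall>v\<in>U. {x\<in>D. E u x} = {x\<in>D. E v x}"
    and "U \<union> D \<subseteq> W" "d \<notin> U"
  shows "gdist W E c d \<le> gsetdist W E U c + gsetdist (U \<union> D) E U d"
proof (cases "gsetdist W E U c = \<infinity> \<or> gsetdist (U \<union> D) E U d = \<infinity>")
  case True
  then show ?thesis by (elim disjE) simp_all
next
  case False
  then obtain u u' where "u \<in> U" "gsetdist W E U c = gdist W E u c"
    and "u' \<in> U" "gsetdist (U \<union> D) E U d = gdist (U \<union> D) E u' d"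
    by (metis gsetdist_attained)
  with gdist_le_via_twin[OF twins assms(3) \<open>u \<in> U\<close> \<open>u' \<in> U\<close> assms(4)] show ?thesis
    by (simp add: gdist_commute[OF \<open>symp E\<close>, where W = W and u = u and v = c])
qed

theorem lemma6p1:
  fixes V C D :: "'a set" and E :: "'a \<Rightarrow> 'a \<Rightarrow> bool"
    and k :: nat and Vs :: "nat \<Rightarrow> 'a set" and c0 d0 :: 'a
  assumes "finite_graph V E"
    and "C \<inter> D = {}" and "C \<union> D = V"
    and "c0 \<in> C" and "d0 \<in> D"
    and "\<forall>i\<in>{1..k}. \<forall>j\<in>{1..k}. i \<noteq> j \<longrightarrow> Vs i \<inter> Vs j = {}"
    and "(\<Union>i\<in>{1..k}. Vs i) = C"
    and "\<forall>i\<in>{1..k}. \<forall>u\<in>Vs i. \<forall>v\<in>Vs i. {w\<in>D. E u w} = {w\<in>D. E v w}"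
  shows "gdist V E c0 d0 =
           Min ((\<lambda>i. gsetdist V E (Vs i) c0 + gsetdist (Vs i \<union> D) E (Vs i) d0) ` {1..k})"
proof -
  define f where "f i = gsetdist V E (Vs i) c0 + gsetdist (Vs i \<union> D) E (Vs i) d0" for i
  have "symp E" using assms(1) by (auto simp: finite_graph_def intro: sympI)
  have upper: "gdist V E c0 d0 \<le> f i" if "i \<in> {1..k}" for i
    unfolding f_def
    by (rule gdist_le_gsetdist_via_twin_class[OF \<open>symp E\<close>]) (use assms(2,3,5,7,8) that in blast)+
  obtain w where w: "w \<in> C" "gdist V E c0 w + gdist (insert w (V - C)) E w d0 \<le> gdist V E c0 d0"
    using gdist_split_at_last_vertex_in[of c0 C d0] assms(2,4,5) by blast
  then obtain i where i: "i \<in> {1..k}" "w \<in> Vs i" using assms(7) by blast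
  have "gsetdist V E (Vs i) c0 \<le> gdist V E w c0" by (rule gsetdist_le_gdist[OF i(2)])
  also have "\<dots> = gdist V E c0 w" by (rule gdist_commute[OF \<open>symp E\<close>])
  finally have to_w: "gsetdist V E (Vs i) c0 \<le> gdist V E c0 w" .
  have "insert w (V - C) \<subseteq> Vs i \<union> D" using i(2) assms(3) by blast
  from gdist_mono[OF this] have from_w: "gsetdist (Vs i \<union> D) E (Vs i) d0 \<le> gdist (insert w (V - C)) E w d0"
    by (rule order_trans[OF gsetdist_le_gdist[OF i(2)]])
  have "f i \<le> gdist V E c0 w + gdist (insert w (V - C)) E w d0"
    unfolding f_def using to_w from_w by (rule add_mono)
  with w(2) have "gdist V E c0 d0 = f i" using upper[OF i(1)] by (simp add: antisym)
  then have "gdist V E c0 d0 \<in> f ` {1..k}" using i(1) by blast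
  then show ?thesis unfolding f_def[symmetric] using upper by (intro Min_eqI[symmetric]) auto
qed

end
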